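(* Fix $1<s<3/2$ and $z\in\mathbb{D}$, and for $N\ge1$ let \[ I_{N,1}=\int_{\mathcal{U}_N(z)^2}T_z(x_1)^sT_z(x_2)^sK(x_1,x_1)K(x_2,x_2)K(x_1,x_2)\,\mathrm{d}\mu(x_1)\,\mathrm{d}\mu(x_2). \] Then \[ \lim_{N\to\infty}I_{N,1}=\frac{4}{(1-|z|^2)^2}\Big(\int_0^1\frac{(1-r)^{s-2}}{(1+r)^{s+2}}\,r\,\mathrm{d}r\Big)^2. \]
   Context: $\mathbb{D}$ is the open unit disk, $\mathrm{d}\mu=\frac{1}{\pi}\mathrm{d}x\,\mathrm{d}y$, $K(z,w)=(1-z\overline{w})^{-2}$. $\varphi_z(x)=\frac{z-x}{1-\overline{z}x}$, $d_{\mathrm{h}}(z,x)=\log\frac{1+|\varphi_z(x)|}{1-|\varphi_z(x)|}$, $T_z(x)=e^{-d_{\mathrm{h}}(z,x)}=\frac{1-|\varphi_z(x)|}{1+|\varphi_z(x)|}$, and $\mathcal{U}_N(z)=\{x\in\mathbb{D}:d_{\mathrm{h}}(z,x)<N\}$. *)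

theory Defs
  imports "HOL-Analysis.Analysis"
begin

definition unit_disk :: "complex set" where
  "unit_disk = ball 0 1"

definition dmu :: "complex measure" where
  "dmu = density lborel (\<lambda>_. ennreal (1 / pi))"

definition bergK :: "complex \<Rightarrow> complex \<Rightarrow> complex" where
  "bergK z w = 1 / (1 - z * cnj w)\<^sup>2"

definition mobius :: "complex \<Rightarrow> complex \<Rightarrow> complex" where
  "mobius z x = (z - x) / (1 - cnj z * x)"

definition hdist :: "complex \<Rightarrow> complex \<Rightarrow> real" where
  "hdist z x = ln ((1 + cmod (mobius z x)) / (1 - cmod (mobius z x)))"

definition Tfun :: "complex \<Rightarrow> complex \<Rightarrow> real" where
  "Tfun z x = (1 - cmod (mobius z x)) / (1 + cmod (mobius z x))"

definition Uset :: "real \<Rightarrow> complex \<Rightarrow> complex set" where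
  "Uset N z = {x \<in> unit_disk. hdist z x < N}"

definition I_N1 :: "real \<Rightarrow> complex \<Rightarrow> real \<Rightarrow> complex" where
  "I_N1 s z N = (LINT p : Uset N z \<times> Uset N z | (dmu \<Otimes>\<^sub>M dmu).
      complex_of_real (Tfun z (fst p) powr s * Tfun z (snd p) powr s)
      * bergK (fst p) (fst p) * bergK (snd p) (snd p) * bergK (fst p) (snd p))"

end

theory Submission
  imports Defs "HOL-Complex_Analysis.Cauchy_Integral_Formula"
begin

(* Write U_N(z) as the image under the involution phi_z of the Euclidean disk of
   radius t = tanh (N/2).  Substituting x = phi_z(w) turns T_z(x)^s K(x,x) dmu(x) into the radial
   density (1-|w|)^(s-2) / (1+|w|)^(s+2) dmu(w), and K(phi_z(w), y) is holomorphic in w.  By the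
   mean value property the integral of K(., y) against this weight over U_N(z) is therefore
   2 J_t K(z, y), where J_t is the radial integral of the weight up to t.  Applying this twice
   (once after conjugating, since K is Hermitian) gives I_{N,1} = 4 J_t^2 K(z,z), and J_t tends to
   the integral over (0,1) as N goes to infinity because the weight is integrable for s > 1. *)

section \<open>Change of variables in the complex plane\<close>

lemma has_integral_compose_cbox:
  fixes g :: "'b::euclidean_space \<Rightarrow> 'a::euclidean_space" and h :: "'a \<Rightarrow> 'b"
    and F :: "'a \<Rightarrow> 'c::banach"
  assumes hg: "\<And>x. h (g x) = x" and gh: "\<And>y. g (h y) = y"
    and contg: "\<And>x. continuous (at x) g"
    and gbox: "\<And>u v. \<exists>w z. g ` cbox u v = cbox w z"
    and hbox: "\<And>u v. \<exists>w z. h ` cbox u v = cbox w z"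
    and gcontent: "\<And>u v. measure lborel (g ` cbox u v) = measure lborel (cbox u v)"
    and F: "F integrable_on g ` cbox a b"
  shows "((\<lambda>x. F (g x)) has_integral integral (g ` cbox a b) F) (cbox a b)"
proof -
  obtain w z where wz: "g ` cbox a b = cbox w z" using gbox by blast
  have "(F has_integral integral (cbox w z) F) (cbox w z)"
    using F wz by (simp add: integrable_integral)
  then have "((\<lambda>x. F (g x)) has_integral (1/1) *\<^sub>R integral (cbox w z) F) (h ` cbox w z)"
    by (rule has_integral_twiddle[where g=g and h=h, rotated -1]) (use hg gh contg gbox hbox gcontent in auto)
  moreover have "h ` cbox w z = cbox a b"
    unfolding wz[symmetric] by (auto simp: image_iff hg)
  ultimately show ?thesis using wz by simp
qed

lemma has_integral_vimage_isometry:
  fixes g :: "'b::euclidean_space \<Rightarrow> 'a::euclidean_space" and h :: "'a \<Rightarrow> 'b"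
    and f :: "'a \<Rightarrow> 'c::banach"
  assumes hg: "\<And>x. h (g x) = x" and gh: "\<And>y. g (h y) = y"
    and contg: "\<And>x. continuous (at x) g"
    and normg: "\<And>x. norm (g x) = norm x"
    and gbox: "\<And>u v. \<exists>w z. g ` cbox u v = cbox w z"
    and hbox: "\<And>u v. \<exists>w z. h ` cbox u v = cbox w z"
    and gcontent: "\<And>u v. measure lborel (g ` cbox u v) = measure lborel (cbox u v)"
    and f: "(f has_integral i) S"
  shows "((\<lambda>x. f (g x)) has_integral i) (g -` S)"
proof -
  define F where "F = (\<lambda>y. if y \<in> S then f y else 0)"
  have Fint: "\<And>a b. F integrable_on cbox a b"
    and Flim: "\<forall>e>0. \<exists>B>0. \<forall>a b. ball 0 B \<subseteq> cbox a b \<longrightarrow> norm (integral (cbox a b) F - i) < e"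
    using f unfolding has_integral_alt'[of f i S] F_def by auto
  have box: "((\<lambda>x. F (g x)) has_integral integral (g ` cbox a b) F) (cbox a b)" for a b
    using gbox Fint by (intro has_integral_compose_cbox[OF hg gh contg gbox hbox gcontent]) metis
  have eqF: "(\<lambda>x. if x \<in> g -` S then f (g x) else 0) = (\<lambda>x. F (g x))"
    by (auto simp: F_def)
  show ?thesis
    unfolding has_integral_alt' eqF
  proof (intro conjI allI impI)
    show "(\<lambda>x. F (g x)) integrable_on cbox a b" for a b
      using box by blast
    fix e :: real assume "e > 0"
    then obtain B where B: "B > 0"
      "\<And>a b. ball 0 B \<subseteq> cbox a b \<Longrightarrow> norm (integral (cbox a b) F - i) < e"
      using Flim by blast
    have "norm (integral (cbox a b) (\<lambda>x. F (g x)) - i) < e" if sub: "ball 0 B \<subseteq> cbox a b" for a b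
    proof -
      obtain w z where wz: "g ` cbox a b = cbox w z" using gbox by blast
      have "ball 0 B \<subseteq> cbox w z"
      proof
        fix y assume "y \<in> ball (0::'a) B"
        then have "h y \<in> cbox a b" using sub normg gh by (metis dist_0_norm mem_ball subsetD)
        then show "y \<in> cbox w z" using wz gh by (metis imageI)
      qed
      then show ?thesis using B(2) integral_unique[OF box] by (simp add: wz)
    qed
    then show "\<exists>B>0. \<forall>a b. ball 0 B \<subseteq> cbox a b \<longrightarrow>
        norm (integral (cbox a b) (\<lambda>x. F (g x)) - i) < e"
      using B(1) by blast
  qed
qed

definition vec_of_complex :: "complex \<Rightarrow> real^2" where
  "vec_of_complex c = vector [Re c, Im c]"

definition complex_of_vec :: "real^2 \<Rightarrow> complex" where
  "complex_of_vec v = Complex (v$1) (v$2)"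

lemma vec_of_complex_nth [simp]: "vec_of_complex c $ 1 = Re c" "vec_of_complex c $ 2 = Im c"
  by (simp_all add: vec_of_complex_def)

lemma complex_of_vec_of_complex [simp]: "complex_of_vec (vec_of_complex c) = c"
  by (simp add: complex_of_vec_def complex_eq_iff)

lemma vec_of_complex_of_vec [simp]: "vec_of_complex (complex_of_vec v) = v"
  by (simp add: vec_eq_iff forall_2 complex_of_vec_def)

lemma Re_complex_of_vec [simp]: "Re (complex_of_vec v) = v$1"
  and Im_complex_of_vec [simp]: "Im (complex_of_vec v) = v$2"
  by (simp_all add: complex_of_vec_def)

lemma vec_of_complex_eq_iff [simp]: "vec_of_complex a = vec_of_complex b \<longleftrightarrow> a = b"
  by (metis complex_of_vec_of_complex)

lemma bounded_linear_vec_of_complex: "bounded_linear vec_of_complex"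
  by (simp add: linear_conv_bounded_linear[symmetric] linearI vec_eq_iff forall_2)

lemma bounded_linear_complex_of_vec: "bounded_linear complex_of_vec"
  by (simp add: linear_conv_bounded_linear[symmetric] linearI complex_eq_iff)

lemma norm_vec_of_complex [simp]: "norm (vec_of_complex c) = norm c"
  by (simp add: norm_vec_def L2_set_def UNIV_2 cmod_def)

lemma norm_complex_of_vec [simp]: "norm (complex_of_vec v) = norm v"
  by (metis vec_of_complex_of_vec norm_vec_of_complex)

lemma in_cbox_vec2_iff:
  "x \<in> cbox a (b::real^2) \<longleftrightarrow> a$1 \<le> x$1 \<and> x$1 \<le> b$1 \<and> a$2 \<le> x$2 \<and> x$2 \<le> b$2"
  by (auto simp: mem_box_cart forall_2)

lemma complex_of_vec_cbox: "complex_of_vec ` cbox u v = cbox (complex_of_vec u) (complex_of_vec v)"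
proof (rule set_eqI)
  show "x \<in> complex_of_vec ` cbox u v \<longleftrightarrow> x \<in> cbox (complex_of_vec u) (complex_of_vec v)" for x
    by (auto simp: in_cbox_complex_iff in_cbox_vec2_iff image_iff intro!: bexI[of _ "vec_of_complex x"])
qed

lemma vec_of_complex_cbox: "vec_of_complex ` cbox u v = cbox (vec_of_complex u) (vec_of_complex v)"
proof (rule set_eqI)
  show "x \<in> vec_of_complex ` cbox u v \<longleftrightarrow> x \<in> cbox (vec_of_complex u) (vec_of_complex v)" for x
    by (auto simp: in_cbox_complex_iff in_cbox_vec2_iff image_iff intro!: bexI[of _ "complex_of_vec x"])
qed

lemma content_cbox_complex:
  "measure lborel (cbox a (b::complex)) =
     (if Re a \<le> Re b \<and> Im a \<le> Im b then (Re b - Re a) * (Im b - Im a) else 0)"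
  by (auto simp: content_cbox_if Basis_complex_def in_cbox_complex_iff box_eq_empty inner_complex_def)

lemma content_cbox_vec2:
  "measure lborel (cbox a (b::real^2)) = (if a$1 \<le> b$1 \<and> a$2 \<le> b$2 then (b$1 - a$1) * (b$2 - a$2) else 0)"
proof -
  have "(\<exists>i. b$i < a$i) \<longleftrightarrow> b$1 < a$1 \<or> b$2 < a$2"
    by (metis (full_types) exhaust_2)
  then have "cbox a b = {} \<longleftrightarrow> \<not> (a$1 \<le> b$1 \<and> a$2 \<le> b$2)"
    unfolding interval_eq_empty_cart by auto
  then show ?thesis unfolding content_cbox_if_cart by (simp add: UNIV_2)
qed

lemma has_integral_complex_of_vec_iff:
  fixes f :: "complex \<Rightarrow> 'c::banach"
  shows "((\<lambda>x. f (complex_of_vec x)) has_integral i) (complex_of_vec -` S) \<longleftrightarrow> (f has_integral i) S"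
proof
  have "isCont vec_of_complex x" for x
    by (rule linear_continuous_at[OF bounded_linear_vec_of_complex])
  moreover have "measure lborel (vec_of_complex ` cbox u v) = measure lborel (cbox u v)" for u v
    by (simp add: vec_of_complex_cbox content_cbox_complex content_cbox_vec2)
  moreover have "vec_of_complex -` (complex_of_vec -` S) = S" by auto
  ultimately show "(f has_integral i) S"
    if "((\<lambda>x. f (complex_of_vec x)) has_integral i) (complex_of_vec -` S)"
    using has_integral_vimage_isometry[where g=vec_of_complex and h=complex_of_vec, OF _ _ _ _ _ _ _ that]
    by (simp add: vec_of_complex_cbox complex_of_vec_cbox) blast
next
  have "isCont complex_of_vec x" for x
    by (rule linear_continuous_at[OF bounded_linear_complex_of_vec])
  moreover have "measure lborel (complex_of_vec ` cbox u v) = measure lborel (cbox u v)" for u v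
    by (simp add: complex_of_vec_cbox content_cbox_complex content_cbox_vec2)
  ultimately show "((\<lambda>x. f (complex_of_vec x)) has_integral i) (complex_of_vec -` S)"
    if "(f has_integral i) S"
    using has_integral_vimage_isometry[where g=complex_of_vec and h=vec_of_complex, OF _ _ _ _ _ _ _ that]
    by (simp add: vec_of_complex_cbox complex_of_vec_cbox) blast
qed

lemma integral_complex_of_vec:
  fixes f :: "complex \<Rightarrow> 'c::banach"
  shows "integral (complex_of_vec -` S) (\<lambda>x. f (complex_of_vec x)) = integral S f"
proof (cases "f integrable_on S")
  case True
  then show ?thesis
    by (intro integral_unique) (simp add: has_integral_complex_of_vec_iff integrable_integral)
next
  case False
  then have "\<not> (\<lambda>x. f (complex_of_vec x)) integrable_on (complex_of_vec -` S)"
    by (simp add: integrable_on_def has_integral_complex_of_vec_iff)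
  with False show ?thesis by (simp add: not_integrable_integral)
qed

lemma absolutely_integrable_on_complex_of_vec_iff:
  fixes f :: "complex \<Rightarrow> 'c::euclidean_space"
  shows "(\<lambda>x. f (complex_of_vec x)) absolutely_integrable_on (complex_of_vec -` S)
           \<longleftrightarrow> f absolutely_integrable_on S"
  unfolding absolutely_integrable_on_def integrable_on_def
  using has_integral_complex_of_vec_iff[of f] has_integral_complex_of_vec_iff[of "\<lambda>x. norm (f x)"]
  by auto

lemma absolutely_integrable_vec_of_complex_iff:
  "(\<lambda>x. vec_of_complex (f x)) absolutely_integrable_on S \<longleftrightarrow> f absolutely_integrable_on S"
proof
  show "f absolutely_integrable_on S" if "(\<lambda>x. vec_of_complex (f x)) absolutely_integrable_on S"
    using absolutely_integrable_linear[OF that bounded_linear_complex_of_vec] by (simp add: o_def)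
  show "(\<lambda>x. vec_of_complex (f x)) absolutely_integrable_on S" if "f absolutely_integrable_on S"
    using absolutely_integrable_linear[OF that bounded_linear_vec_of_complex] by (simp add: o_def)
qed

lemma has_absolute_integral_complex_of_vec_iff:
  fixes f :: "complex \<Rightarrow> complex"
  defines "F \<equiv> \<lambda>x. vec_of_complex (f (complex_of_vec x))"
  shows "F absolutely_integrable_on (complex_of_vec -` S) \<and>
           integral (complex_of_vec -` S) F = vec_of_complex b
     \<longleftrightarrow> f absolutely_integrable_on S \<and> integral S f = b"
proof -
  have "F absolutely_integrable_on (complex_of_vec -` S) \<longleftrightarrow> f absolutely_integrable_on S"
    unfolding F_def absolutely_integrable_on_complex_of_vec_iff[where f="\<lambda>x. vec_of_complex (f x)"]
    by (rule absolutely_integrable_vec_of_complex_iff)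
  moreover have "integral (complex_of_vec -` S) F = vec_of_complex (integral S f)"
    if "f absolutely_integrable_on S"
  proof -
    have "integral (complex_of_vec -` S) F = integral S (vec_of_complex \<circ> f)"
      unfolding F_def integral_complex_of_vec[where f="\<lambda>x. vec_of_complex (f x)"] by (simp add: o_def)
    also have "\<dots> = vec_of_complex (integral S f)"
      using that by (intro integral_linear bounded_linear_vec_of_complex) (simp add: set_lebesgue_integral_eq_integral(1))
    finally show ?thesis .
  qed
  ultimately show ?thesis by auto
qed

definition jacobian_det :: "(complex \<Rightarrow> complex) \<Rightarrow> real" where
  "jacobian_det L = Re (L 1) * Im (L \<i>) - Re (L \<i>) * Im (L 1)"

lemma jacobian_det_mult: "jacobian_det (\<lambda>h. d * h) = (cmod d)^2"
  unfolding cmod_power2 by (simp add: jacobian_det_def power2_eq_square)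

lemma det_matrix_vec_of_complex:
  "det (matrix (\<lambda>h. vec_of_complex (L (complex_of_vec h)))) = jacobian_det L"
proof -
  have "complex_of_vec (axis 1 1) = 1" "complex_of_vec (axis 2 1) = \<i>"
    by (simp_all add: complex_of_vec_def axis_def complex_eq_iff)
  then show ?thesis by (simp add: det_2 matrix_def jacobian_det_def)
qed

lemma has_derivative_vec_of_complex_conj:
  assumes "(g has_derivative g') (at (complex_of_vec x))"
  shows "((\<lambda>x. vec_of_complex (g (complex_of_vec x))) has_derivative
           (\<lambda>h. vec_of_complex (g' (complex_of_vec h)))) (at x)"
proof -
  from has_derivative_compose[OF bounded_linear_imp_has_derivative[OF bounded_linear_complex_of_vec] assms]
  have "((\<lambda>x. g (complex_of_vec x)) has_derivative (\<lambda>h. g' (complex_of_vec h))) (at x)"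
    by (simp add: o_def)
  from has_derivative_compose[OF this bounded_linear_imp_has_derivative[OF bounded_linear_vec_of_complex]]
  show ?thesis by (simp add: o_def)
qed

lemma inj_on_vec_of_complex_conj:
  "inj_on g S \<Longrightarrow> inj_on (\<lambda>x. vec_of_complex (g (complex_of_vec x))) (complex_of_vec -` S)"
  by (rule inj_onI) (metis inj_on_def vec_of_complex_eq_iff vec_of_complex_of_vec vimageE)

lemma image_vec_of_complex_conj:
  "(\<lambda>x. vec_of_complex (g (complex_of_vec x))) ` (complex_of_vec -` S) = complex_of_vec -` (g ` S)"
proof (intro equalityI subsetI)
  fix y assume "y \<in> complex_of_vec -` (g ` S)"
  then obtain w where w: "w \<in> S" "complex_of_vec y = g w" by auto
  then show "y \<in> (\<lambda>x. vec_of_complex (g (complex_of_vec x))) ` (complex_of_vec -` S)"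
    by (intro image_eqI[of _ _ "vec_of_complex w"]) (simp_all flip: w(2))
qed auto

theorem has_absolute_integral_change_of_variables_complex:
  fixes f :: "complex \<Rightarrow> complex" and g :: "complex \<Rightarrow> complex"
  assumes S: "open S" and der: "\<And>x. x \<in> S \<Longrightarrow> (g has_derivative g' x) (at x)"
    and inj: "inj_on g S"
  shows "(\<lambda>x. \<bar>jacobian_det (g' x)\<bar> *\<^sub>R f (g x)) absolutely_integrable_on S \<and>
           integral S (\<lambda>x. \<bar>jacobian_det (g' x)\<bar> *\<^sub>R f (g x)) = b
     \<longleftrightarrow> f absolutely_integrable_on (g ` S) \<and> integral (g ` S) f = b"
proof -
  define S' where "S' = complex_of_vec -` S"
  define G where "G = (\<lambda>x. vec_of_complex (g (complex_of_vec x)))"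
  define G' where "G' = (\<lambda>x h. vec_of_complex (g' (complex_of_vec x) (complex_of_vec h)))"
  define F where "F = (\<lambda>x. vec_of_complex (f (complex_of_vec x)))"
  have S': "S' \<in> sets lebesgue"
    unfolding S'_def
    using continuous_open_vimage[OF S linear_continuous_at[OF bounded_linear_complex_of_vec]]
    by (simp add: borel_open sets_completionI_sets)
  have derG: "(G has_derivative G' x) (at x within S')" if "x \<in> S'" for x
    using has_derivative_vec_of_complex_conj[OF der] that
    by (simp add: S'_def G_def G'_def has_derivative_at_withinI)
  have "vec_of_complex (r *\<^sub>R c) = r *\<^sub>R vec_of_complex c" for r c
    by (simp add: vec_eq_iff forall_2)
  then have "(\<lambda>x. \<bar>det (matrix (G' x))\<bar> *\<^sub>R F (G x)) =
      (\<lambda>x. vec_of_complex (\<bar>jacobian_det (g' (complex_of_vec x))\<bar> *\<^sub>R f (g (complex_of_vec x))))"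
    by (simp add: G'_def det_matrix_vec_of_complex F_def G_def)
  then have "(\<lambda>x. vec_of_complex (\<bar>jacobian_det (g' (complex_of_vec x))\<bar> *\<^sub>R f (g (complex_of_vec x))))
        absolutely_integrable_on S' \<and>
      integral S' (\<lambda>x. vec_of_complex (\<bar>jacobian_det (g' (complex_of_vec x))\<bar> *\<^sub>R f (g (complex_of_vec x))))
        = vec_of_complex b \<longleftrightarrow>
      F absolutely_integrable_on (complex_of_vec -` (g ` S)) \<and>
      integral (complex_of_vec -` (g ` S)) F = vec_of_complex b"
    using has_absolute_integral_change_of_variables[OF S' derG, of F "vec_of_complex b"]
      inj_on_vec_of_complex_conj[OF inj]
    by (simp only: G_def S'_def image_vec_of_complex_conj)
  then show ?thesis
    unfolding F_def S'_def has_absolute_integral_complex_of_vec_iff[where f=f]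
      has_absolute_integral_complex_of_vec_iff[where f="\<lambda>x. \<bar>jacobian_det (g' x)\<bar> *\<^sub>R f (g x)"] .
qed


section \<open>Polar coordinates and the mean value property\<close>

lemma has_integral_cbox_Complex_pair:
  fixes H :: "complex \<Rightarrow> 'c::banach"
  assumes "(H has_integral I) (cbox (Complex a c) (Complex b d))"
  shows "((\<lambda>p. H (Complex (fst p) (snd p))) has_integral I) (cbox (a, c) (b, d))"
proof -
  define g where "g = (\<lambda>p::real \<times> real. Complex (fst p) (snd p))"
  define h where "h = (\<lambda>w. (Re w, Im w))"
  have g_cbox: "g ` cbox u v = cbox (g u) (g v)" for u v
    by (cases u; cases v) (simp add: g_def cbox_Pair_eq cbox_Complex_eq split_beta')
  have h_cbox: "h ` cbox u v = cbox (h u) (h v)" for u v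
  proof (rule set_eqI)
    fix x :: "real \<times> real"
    obtain x1 x2 where x: "x = (x1, x2)" by fastforce
    show "x \<in> h ` cbox u v \<longleftrightarrow> x \<in> cbox (h u) (h v)"
      by (auto simp: x h_def in_cbox_complex_iff cbox_Pair_eq image_iff intro!: bexI[of _ "Complex x1 x2"])
  qed
  have "g -` cbox (Complex a c) (Complex b d) = cbox (a, c) (b, d)"
    by (auto simp: g_def in_cbox_complex_iff cbox_Pair_eq)
  moreover have "((\<lambda>x. H (g x)) has_integral I) (g -` cbox (Complex a c) (Complex b d))"
  proof (rule has_integral_vimage_isometry[where h=h, OF _ _ _ _ _ _ _ assms])
    show "h (g x) = x" "g (h y) = y" for x y
      by (simp_all add: g_def h_def)
    show "isCont g x" for x
      unfolding g_def Complex_eq by (intro continuous_intros)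
    show "norm (g x) = norm x" for x
      using norm_Pair[of "fst x" "snd x"] by (simp add: g_def cmod_def)
    show "\<exists>w z. g ` cbox u v = cbox w z" for u v
      using g_cbox by blast
    show "\<exists>w z. h ` cbox u v = cbox w z" for u v
      using h_cbox by blast
    show "measure lborel (g ` cbox u v) = measure lborel (cbox u v)" for u v
      unfolding g_cbox by (cases u; cases v) (simp add: content_cbox_complex content_Pair g_def)
  qed
  ultimately show ?thesis by (simp add: g_def)
qed

lemma integral_cbox_complex_iterated:
  fixes H :: "complex \<Rightarrow> 'c::banach"
  assumes H: "continuous_on (cbox (Complex a c) (Complex b d)) H"
  shows "integral (cbox (Complex a c) (Complex b d)) H =
           integral {a..b} (\<lambda>x. integral {c..d} (\<lambda>y. H (Complex x y)))"
proof -
  have "continuous_on (cbox (a, c) (b, d)) (\<lambda>p. H (Complex (fst p) (snd p)))"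
    by (rule continuous_on_compose2[OF H]) (auto intro!: continuous_intros simp: in_cbox_complex_iff cbox_Pair_eq)
  moreover have "((\<lambda>p. H (Complex (fst p) (snd p))) has_integral
      integral (cbox (Complex a c) (Complex b d)) H) (cbox (a, c) (b, d))"
    using H by (intro has_integral_cbox_Complex_pair integrable_integral integrable_continuous)
  ultimately show ?thesis
    using integral_prod_continuous[of a c b d "\<lambda>p. H (Complex (fst p) (snd p))"]
    by (simp add: integral_unique)
qed

text \<open>Polar coordinates, with the radius in the real part and the angle, measured in full
  turns, in the imaginary part.\<close>

definition polar_map :: "complex \<Rightarrow> complex" where
  "polar_map c = of_real (Re c * cos (2*pi*Im c)) + \<i> * of_real (Re c * sin (2*pi*Im c))"

definition polar_map' :: "complex \<Rightarrow> complex \<Rightarrow> complex" where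
  "polar_map' c h = of_real (Re h * cos (2*pi*Im c) - Re c * (2*pi*Im h) * sin (2*pi*Im c))
      + \<i> * of_real (Re h * sin (2*pi*Im c) + Re c * (2*pi*Im h) * cos (2*pi*Im c))"

lemma has_derivative_polar_map: "(polar_map has_derivative polar_map' c) (at c)"
  unfolding polar_map_def polar_map'_def
  by (auto intro!: derivative_eq_intros simp: algebra_simps)

lemma jacobian_det_polar_map': "jacobian_det (polar_map' c) = 2 * pi * Re c"
proof -
  define \<theta> where "\<theta> = 2*pi*Im c"
  have "jacobian_det (polar_map' c) = 2*pi*Re c * (cos \<theta> * cos \<theta>) + 2*pi*Re c * (sin \<theta> * sin \<theta>)"
    by (simp add: jacobian_det_def polar_map'_def algebra_simps \<theta>_def)
  also have "\<dots> = 2*pi*Re c * (cos \<theta> * cos \<theta> + sin \<theta> * sin \<theta>)"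
    by (simp only: distrib_left)
  also have "cos \<theta> * cos \<theta> + sin \<theta> * sin \<theta> = 1"
    using sin_cos_squared_add2[of \<theta>] by (simp only: power2_eq_square)
  finally show ?thesis by simp
qed

lemma polar_map_eq: "polar_map c = of_real (Re c) * cis (2*pi*Im c)"
  by (simp add: polar_map_def complex_eq_iff)

lemma norm_polar_map: "Re c \<ge> 0 \<Longrightarrow> norm (polar_map c) = Re c"
  by (simp add: polar_map_eq norm_mult)

lemma continuous_on_polar_map: "continuous_on A polar_map"
  unfolding polar_map_def by (intro continuous_intros)

lemma inj_on_polar_map: "inj_on polar_map (box 0 (Complex t 1))"
proof (rule inj_onI)
  fix x y
  assume x: "x \<in> box 0 (Complex t 1)" and y: "y \<in> box 0 (Complex t 1)"
    and eq: "polar_map x = polar_map y"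
  have xr: "0 < Re x" "0 < Im x" "Im x < 1" and yr: "0 < Re y" "0 < Im y" "Im y < 1"
    using x y by (auto simp: in_box_complex_iff)
  have Re_eq: "Re x = Re y"
    using norm_polar_map[of x] norm_polar_map[of y] eq xr yr by simp
  then have "exp (\<i> * of_real (2*pi*Im x)) = exp (\<i> * of_real (2*pi*Im y))"
    using eq xr by (simp add: polar_map_eq cis_conv_exp)
  then obtain n :: int where "\<i> * of_real (2*pi*Im x) = \<i> * of_real (2*pi*Im y) + (of_int (2 * n) * pi) * \<i>"
    unfolding exp_eq by blast
  then have "2*pi*(Im x - Im y - n) = 0"
    by (simp add: complex_eq_iff algebra_simps)
  then have "Im x - Im y = n" by simp
  moreover have "\<bar>Im x - Im y\<bar> < 1" using xr yr by auto
  ultimately have "n = 0" by linarith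
  then have "Im x = Im y" using \<open>Im x - Im y = n\<close> by simp
  with Re_eq show "x = y" by (simp add: complex_eq_iff)
qed

lemma polar_map_box_subset: "polar_map ` box 0 (Complex t 1) \<subseteq> ball 0 t"
  by (auto simp: in_box_complex_iff norm_polar_map)

lemma ball_minus_polar_map_box: "ball 0 t - polar_map ` box 0 (Complex t 1) \<subseteq> {x. \<i> \<bullet> x = 0}"
proof
  fix w assume w: "w \<in> ball 0 t - polar_map ` box 0 (Complex t 1)"
  show "w \<in> {x. \<i> \<bullet> x = 0}"
  proof (rule ccontr)
    assume "w \<notin> {x. \<i> \<bullet> x = 0}"
    then have imw: "Im w \<noteq> 0" by (simp add: inner_complex_def)
    define \<theta> where "\<theta> = Arg w"
    have wr: "w = of_real (cmod w) * cis \<theta>" using rcis_cmod_Arg[of w] by (simp add: rcis_def \<theta>_def)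
    have "Im w = cmod w * sin \<theta>" by (subst wr) simp
    then have "sin \<theta> \<noteq> 0" using imw by auto
    then have b: "-pi < \<theta>" "\<theta> \<le> pi" "\<theta> \<noteq> 0" "\<theta> \<noteq> pi"
      using Arg_bounded[of w] by (auto simp: \<theta>_def)
    define \<tau> where "\<tau> = (if \<theta> > 0 then \<theta> / (2*pi) else \<theta> / (2*pi) + 1)"
    have \<tau>: "0 < \<tau>" "\<tau> < 1"
      using b pi_gt_zero by (auto simp: \<tau>_def field_simps)
    have "cis (2*pi*\<tau>) = cis \<theta>"
    proof (cases "\<theta> > 0")
      case False
      then have "2*pi*\<tau> = \<theta> + 2*pi" by (simp add: \<tau>_def field_simps)
      then show ?thesis by (simp add: cis.ctr complex_eq_iff)
    qed (simp add: \<tau>_def)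
    then have "polar_map (Complex (cmod w) \<tau>) = w" using wr by (simp add: polar_map_eq)
    moreover have "Complex (cmod w) \<tau> \<in> box 0 (Complex t 1)"
      using w imw \<tau> by (auto simp: in_box_complex_iff)
    ultimately have "w \<in> polar_map ` box 0 (Complex t 1)" by (metis image_eqI)
    with w show False by blast
  qed
qed

lemma integral_ball_eq_polar_map_image:
  fixes H :: "complex \<Rightarrow> complex"
  assumes "H absolutely_integrable_on ball 0 t"
  shows "H absolutely_integrable_on polar_map ` box 0 (Complex t 1)"
    "integral (ball 0 t) H = integral (polar_map ` box 0 (Complex t 1)) H"
proof -
  have neg1: "negligible {x \<in> ball 0 t - polar_map ` box 0 (Complex t 1). H x \<noteq> 0}"
    by (rule negligible_subset[OF negligible_hyperplane[of \<i> 0]])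
      (use ball_minus_polar_map_box[of t] in auto)
  have "{x \<in> polar_map ` box 0 (Complex t 1) - ball 0 t. H x \<noteq> 0} = {}"
    using polar_map_box_subset[of t] by auto
  then have neg2: "negligible {x \<in> polar_map ` box 0 (Complex t 1) - ball 0 t. H x \<noteq> 0}"
    by (metis negligible_empty)
  show "H absolutely_integrable_on polar_map ` box 0 (Complex t 1)"
    using assms absolutely_integrable_spike_set_eq[OF neg1 neg2] by blast
  show "integral (ball 0 t) H = integral (polar_map ` box 0 (Complex t 1)) H"
    by (rule integral_spike_set[OF neg1 neg2])
qed

lemma integral_ball_polar:
  fixes H :: "complex \<Rightarrow> complex"
  assumes t: "t > 0" and H: "continuous_on (cball 0 t) H"
  shows "H absolutely_integrable_on ball 0 t"
    "integral (ball 0 t) H =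
       integral {0..t} (\<lambda>r. integral {0..1} (\<lambda>\<tau>. (2*pi*r) *\<^sub>R H (of_real r * cis (2*pi*\<tau>))))"
proof -
  define S where "S = box 0 (Complex t 1)"
  define \<Psi> where "\<Psi> = (\<lambda>x. \<bar>jacobian_det (polar_map' x)\<bar> *\<^sub>R H (polar_map x))"
  have "set_integrable lborel (cball 0 t) H"
    using borel_integrable_compact[OF compact_cball H] by (simp add: set_integrable_def)
  then have "H absolutely_integrable_on cball 0 t"
    unfolding set_integrable_def using integrable_completion borel_measurable_integrable by blast
  then show Hball: "H absolutely_integrable_on ball 0 t"
    by (rule set_integrable_subset) (auto simp: borel_open sets_completionI_sets)
  have "integral (ball 0 t) H = integral S \<Psi>"
    using has_absolute_integral_change_of_variables_complex[of S polar_map polar_map' H "integral (polar_map ` S) H"]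
      has_derivative_polar_map inj_on_polar_map integral_ball_eq_polar_map_image[OF Hball]
    by (simp add: S_def open_box \<Psi>_def)
  also have "\<dots> = integral (cbox (Complex 0 0) (Complex t 1)) \<Psi>"
    by (simp add: S_def integral_open_interval zero_complex.code)
  also have "\<dots> = integral {0..t} (\<lambda>x. integral {0..1} (\<lambda>y. \<Psi> (Complex x y)))"
  proof (rule integral_cbox_complex_iterated)
    have "polar_map ` cbox (Complex 0 0) (Complex t 1) \<subseteq> cball 0 t"
      by (auto simp: in_cbox_complex_iff norm_polar_map)
    then have "continuous_on (cbox (Complex 0 0) (Complex t 1)) (\<lambda>x. H (polar_map x))"
      by (intro continuous_on_compose2[OF H continuous_on_polar_map]) auto
    then show "continuous_on (cbox (Complex 0 0) (Complex t 1)) \<Psi>"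
      unfolding \<Psi>_def jacobian_det_polar_map' by (intro continuous_intros)
  qed
  also have "\<dots> = integral {0..t} (\<lambda>r. integral {0..1} (\<lambda>\<tau>. (2*pi*r) *\<^sub>R H (of_real r * cis (2*pi*\<tau>))))"
    by (intro integral_cong) (simp add: \<Psi>_def jacobian_det_polar_map' polar_map_eq)
  finally show "integral (ball 0 t) H =
      integral {0..t} (\<lambda>r. integral {0..1} (\<lambda>\<tau>. (2*pi*r) *\<^sub>R H (of_real r * cis (2*pi*\<tau>))))" .
qed

lemma integral_circle_mean_value:
  fixes h :: "complex \<Rightarrow> complex"
  assumes h: "h holomorphic_on ball 0 R" and r: "0 \<le> r" "r < R"
  shows "integral {0..1} (\<lambda>\<tau>. h (of_real r * cis (2*pi*\<tau>))) = h 0"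
proof (cases "r = 0")
  case False
  then have r0: "r > 0" using r by simp
  have "((\<lambda>w. h w / (w - 0)) has_contour_integral
      of_real (2 * pi) * \<i> * winding_number (circlepath 0 r) 0 * h 0) (circlepath 0 r)"
  proof (rule Cauchy_integral_formula_convex_simple[OF convex_ball h])
    show "0 \<in> interior (ball (0::complex) R)" using r by simp
    show "path_image (circlepath 0 r) \<subseteq> ball 0 R - {0}" using r r0 by auto
  qed auto
  then have "((\<lambda>x. h (circlepath 0 r x) / circlepath 0 r x *
        vector_derivative (circlepath 0 r) (at x within {0..1})) has_integral 2 * pi * \<i> * h 0) {0..1}"
    using winding_number_circlepath_centre[OF r0] by (simp add: has_contour_integral_def)
  then have scaled: "((\<lambda>\<tau>. (2 * pi * \<i>) * h (of_real r * cis (2*pi*\<tau>))) has_integral 2 * pi * \<i> * h 0) {0..1}"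
  proof (rule has_integral_eq[rotated])
    fix x :: real assume x: "x \<in> {0..1}"
    have e: "circlepath 0 r x = of_real r * cis (2*pi*x)"
      by (simp add: circlepath cis_conv_exp mult_ac)
    have ne: "circlepath 0 r x \<noteq> 0" using r0 by (simp add: e)
    have "vector_derivative (circlepath 0 r) (at x within {0..1}) = 2 * pi * \<i> * r * exp (2 * of_real pi * \<i> * x)"
      using x by (intro vector_derivative_circlepath01) auto
    then show "h (circlepath 0 r x) / circlepath 0 r x * vector_derivative (circlepath 0 r) (at x within {0..1})
      = (2 * pi * \<i>) * h (of_real r * cis (2*pi*x))"
      using ne by (simp add: e cis_conv_exp field_simps mult_ac)
  qed
  then have "((\<lambda>\<tau>. h (of_real r * cis (2*pi*\<tau>))) has_integral h 0) {0..1}"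
    using has_integral_mult_right[OF scaled, of "1 / (2 * pi * \<i>)"] by simp
  then show ?thesis by (rule integral_unique)
qed simp

lemma integral_ball_radial_mean_value:
  fixes F :: "real \<Rightarrow> real" and h :: "complex \<Rightarrow> complex"
  assumes t: "0 < t" "t < R" and h: "h holomorphic_on ball 0 R" and F: "continuous_on {0..t} F"
  shows "integral (ball 0 t) (\<lambda>w. of_real (F (cmod w)) * h w) =
           of_real (2 * pi * integral {0..t} (\<lambda>r. F r * r)) * h 0"
proof -
  define H where "H = (\<lambda>w. of_real (F (cmod w)) * h w)"
  have "continuous_on (cball 0 t) h"
    using holomorphic_on_imp_continuous_on[OF h] by (rule continuous_on_subset) (use t in auto)
  moreover have "continuous_on (cball 0 t) (\<lambda>w. F (cmod w))"
    by (rule continuous_on_compose2[OF F]) (auto intro: continuous_intros)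
  ultimately have "continuous_on (cball 0 t) H" unfolding H_def by (intro continuous_intros)
  then have "integral (ball 0 t) H =
      integral {0..t} (\<lambda>r. integral {0..1} (\<lambda>\<tau>. (2*pi*r) *\<^sub>R H (of_real r * cis (2*pi*\<tau>))))"
    by (rule integral_ball_polar(2)[OF t(1)])
  also have "\<dots> = integral {0..t} (\<lambda>r. (2*pi * (F r * r)) *\<^sub>R h 0)"
  proof (rule integral_cong)
    fix r assume r: "r \<in> {0..t}"
    have "integral {0..1} (\<lambda>\<tau>. (2*pi*r) *\<^sub>R H (of_real r * cis (2*pi*\<tau>)))
        = integral {0..1} (\<lambda>\<tau>. (2*pi * (F r * r)) *\<^sub>R h (of_real r * cis (2*pi*\<tau>)))"
      using r by (intro integral_cong) (simp add: H_def norm_mult scaleR_conv_of_real mult_ac)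
    also have "\<dots> = (2*pi * (F r * r)) *\<^sub>R h 0"
      using integral_circle_mean_value[OF h, of r] r t by simp
    finally show "integral {0..1} (\<lambda>\<tau>. (2*pi*r) *\<^sub>R H (of_real r * cis (2*pi*\<tau>))) =
        (2*pi * (F r * r)) *\<^sub>R h 0" .
  qed
  also have "\<dots> = integral {0..t} (\<lambda>r. 2*pi * (F r * r)) *\<^sub>R h 0"
    by (intro integral_unique has_integral_scaleR_left integrable_integral
        integrable_continuous_real continuous_intros F)
  also have "integral {0..t} (\<lambda>r. 2*pi * (F r * r)) = 2 * pi * integral {0..t} (\<lambda>r. F r * r)"
    by (rule integral_mult_right)
  finally show ?thesis by (simp add: H_def scaleR_conv_of_real)
qed


section \<open>The Moebius involution and the Bergman kernel\<close>

lemma mobius_denom_nonzero: "cmod z < 1 \<Longrightarrow> cmod w < 1 \<Longrightarrow> 1 - cnj z * w \<noteq> 0"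
  by (metis complex_mod_cnj mult_strict_mono' norm_ge_zero norm_mult norm_one
      eq_iff_diff_eq_0 less_irrefl mult_1_right)

lemma mobius_mobius:
  assumes z: "cmod z < 1" and D: "1 - cnj z * w \<noteq> 0"
  shows "mobius z (mobius z w) = w"
proof -
  have zz: "1 - cnj z * z \<noteq> 0"
    using mobius_denom_nonzero[OF z z] .
  have 1: "z - mobius z w = w * (1 - cnj z * z) / (1 - cnj z * w)"
    using D unfolding mobius_def by (simp add: field_simps)
  have 2: "1 - cnj z * mobius z w = (1 - cnj z * z) / (1 - cnj z * w)"
    using D unfolding mobius_def by (simp add: field_simps)
  show ?thesis
    using D zz unfolding mobius_def[of z "mobius z w"] 1 2 by simp
qed

lemma one_minus_norm_mobius_sq:
  assumes "1 - cnj z * w \<noteq> 0"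
  shows "1 - (cmod (mobius z w))^2 = (1 - (cmod z)^2) * (1 - (cmod w)^2) / (cmod (1 - cnj z * w))^2"
proof -
  have "(cmod (1 - cnj z * w))^2 - (cmod (z - w))^2 = (1 - (cmod z)^2) * (1 - (cmod w)^2)"
    unfolding cmod_power2 by (simp add: algebra_simps power2_eq_square)
  then show ?thesis
    using assms unfolding mobius_def norm_divide power_divide by (simp add: field_simps)
qed

lemma norm_mobius_less_1:
  assumes "cmod z < 1" "cmod w < 1"
  shows "cmod (mobius z w) < 1"
proof -
  have D: "1 - cnj z * w \<noteq> 0" using mobius_denom_nonzero assms by blast
  have "1 - (cmod (mobius z w))^2 > 0"
    unfolding one_minus_norm_mobius_sq[OF D] using assms D
    by (intro divide_pos_pos mult_pos_pos) (auto simp: abs_square_less_1)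
  then show ?thesis by (simp add: abs_square_less_1)
qed

lemma mobius_has_field_derivative:
  assumes "1 - cnj z * w \<noteq> 0"
  shows "(mobius z has_field_derivative ((cmod z)^2 - 1) / (1 - cnj z * w)^2) (at w)"
proof -
  have "((\<lambda>x. (z - x) / (1 - cnj z * x)) has_field_derivative
        ((-1) * (1 - cnj z * w) - (z - w) * (- cnj z)) / (1 - cnj z * w)^2) (at w)"
    using assms by (auto intro!: derivative_eq_intros simp: power2_eq_square)
  moreover have "(-1) * (1 - cnj z * w) - (z - w) * (- cnj z) = complex_of_real ((cmod z)^2 - 1)"
    by (simp add: algebra_simps) (metis complex_norm_square of_real_power)
  ultimately show ?thesis unfolding mobius_def by (simp only:)
qed

lemma continuous_on_mobius: "cmod z < 1 \<Longrightarrow> continuous_on (ball 0 1) (mobius z)"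
  unfolding mobius_def by (intro continuous_intros) (use mobius_denom_nonzero in auto)

lemma inj_on_mobius: "cmod z < 1 \<Longrightarrow> inj_on (mobius z) (ball 0 1)"
  by (rule inj_onI) (metis mobius_mobius mobius_denom_nonzero mem_ball_0)

lemma mobius_image_ball:
  assumes z: "cmod z < 1" and t: "t \<le> 1"
  shows "mobius z ` ball 0 t = {x \<in> ball 0 1. cmod (mobius z x) < t}"
proof (intro equalityI subsetI)
  fix x assume "x \<in> mobius z ` ball 0 t"
  then obtain w where w: "cmod w < t" "x = mobius z w" by auto
  then have w1: "cmod w < 1" using t by simp
  then show "x \<in> {x \<in> ball 0 1. cmod (mobius z x) < t}"
    using w norm_mobius_less_1[OF z w1] mobius_mobius[OF z mobius_denom_nonzero[OF z w1]] by simp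
next
  fix x assume x: "x \<in> {x \<in> ball 0 1. cmod (mobius z x) < t}"
  then have "x = mobius z (mobius z x)"
    using mobius_mobius[OF z mobius_denom_nonzero[OF z]] by simp
  then show "x \<in> mobius z ` ball 0 t" using x by auto
qed

lemma Tfun_mobius:
  assumes "cmod z < 1" "cmod w < 1"
  shows "Tfun z (mobius z w) = (1 - cmod w) / (1 + cmod w)"
  using mobius_mobius[OF assms(1) mobius_denom_nonzero[OF assms]] by (simp add: Tfun_def)

lemma Tfun_pos: "cmod z < 1 \<Longrightarrow> cmod x < 1 \<Longrightarrow> Tfun z x > 0"
  using norm_mobius_less_1[of z x] by (simp add: Tfun_def add_pos_nonneg)

lemma continuous_on_Tfun_powr [continuous_intros]:
  assumes z: "cmod z < 1" and f: "continuous_on S f" and S: "f ` S \<subseteq> ball 0 1"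
  shows "continuous_on S (\<lambda>x. Tfun z (f x) powr s)"
proof -
  have "continuous_on S (\<lambda>x. mobius z (f x))"
    by (rule continuous_on_compose2[OF continuous_on_mobius[OF z] f S])
  moreover have "Tfun z (f x) \<noteq> 0" if "x \<in> S" for x
    using Tfun_pos[OF z] S that by fastforce
  ultimately show ?thesis
    unfolding Tfun_def by (intro continuous_intros) auto
qed

lemma bergK_denom_nonzero: "cmod x < 1 \<Longrightarrow> cmod y < 1 \<Longrightarrow> 1 - x * cnj y \<noteq> 0"
  using mobius_denom_nonzero[of y x] by (simp add: mult.commute)

lemma continuous_on_bergK [continuous_intros]:
  assumes "continuous_on S f" "continuous_on S g" "f ` S \<subseteq> ball 0 1" "g ` S \<subseteq> ball 0 1"
  shows "continuous_on S (\<lambda>x. bergK (f x) (g x))"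
  unfolding bergK_def using assms bergK_denom_nonzero
  by (intro continuous_intros) (auto simp: image_subset_iff)

lemma bergK_diag: "bergK x x = of_real (1 / (1 - (cmod x)^2)^2)"
  unfolding bergK_def complex_norm_square[symmetric] by simp

lemma cnj_bergK: "cnj (bergK x y) = bergK y x"
  by (simp add: bergK_def mult.commute)

text \<open>The transformation law \<open>|\<phi>\<^sub>z'(w)|\<^sup>2 K(\<phi>\<^sub>z(w), \<phi>\<^sub>z(w)) = K(w, w)\<close>, written out.\<close>

lemma norm_mobius_deriv_sq_bergK_diag:
  assumes z: "cmod z < 1" and w: "cmod w < 1"
  shows "(cmod (((cmod z)^2 - 1) / (1 - cnj z * w)^2))^2 * (1 / (1 - (cmod (mobius z w))^2)^2)
       = 1 / (1 - (cmod w)^2)^2"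
proof -
  have D: "1 - cnj z * w \<noteq> 0" using mobius_denom_nonzero z w by blast
  have zz: "1 - (cmod z)^2 > 0" and ww: "1 - (cmod w)^2 > 0"
    using z w by (simp_all add: abs_square_less_1)
  have n: "cmod (((cmod z)^2 - 1) / (1 - cnj z * w)^2) = (1 - (cmod z)^2) / (cmod (1 - cnj z * w))^2"
  proof -
    have "cmod (complex_of_real ((cmod z)^2 - 1)) = 1 - (cmod z)^2" using zz by (simp only: norm_of_real)
    moreover have "complex_of_real ((cmod z)^2) - 1 = complex_of_real ((cmod z)^2 - 1)" by simp
    ultimately show ?thesis by (simp only: norm_divide norm_power)
  qed
  have "((1 - a)/c)^2 * (1/((1-a)*(1-b)/c)^2) = 1/(1-b)^2"
    if "a < 1" "b < 1" "c \<noteq> 0" for a b c :: real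
  proof -
    have "((1-a)*(1-b)/c)^2 = ((1-a)/c)^2 * (1-b)^2"
      by (simp add: power_mult_distrib[symmetric])
    moreover have "((1 - a)/c)^2 \<noteq> 0" using that by simp
    ultimately show ?thesis using that by simp
  qed
  then show ?thesis
    unfolding n one_minus_norm_mobius_sq[OF D] using D zz ww by simp
qed

lemma holomorphic_on_bergK_mobius:
  assumes z: "cmod z < 1" and y: "cmod y < 1"
  shows "(\<lambda>w. bergK (mobius z w) y) holomorphic_on ball 0 1"
proof -
  have "(1 - mobius z w * cnj y)^2 \<noteq> 0" if "w \<in> ball 0 1" for w
    using bergK_denom_nonzero[OF norm_mobius_less_1[OF z] y] that by simp
  then show ?thesis unfolding bergK_def mobius_def
    by (intro holomorphic_intros) (use mobius_denom_nonzero[OF z] in auto)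
qed

section \<open>Integrating the kernel over a hyperbolic disk\<close>

definition radial_weight :: "real \<Rightarrow> real \<Rightarrow> real" where
  "radial_weight s r = (1 - r) powr (s - 2) / (1 + r) powr (s + 2)"

lemma radial_weight_eq:
  assumes "0 \<le> r" "r < 1"
  shows "radial_weight s r = ((1 - r) / (1 + r)) powr s * (1 / (1 - r^2)^2)"
proof -
  have a: "0 < 1 - r" "0 < 1 + r" using assms by auto
  have "(1 - r) powr (s - 2) = (1 - r) powr s / (1 - r)^2"
    using a by (simp add: powr_diff powr_numeral)
  moreover have "(1 + r) powr (s + 2) = (1 + r) powr s * (1 + r)^2"
    using a by (simp add: powr_add powr_numeral)
  moreover have "1 - r^2 = (1 - r) * (1 + r)" by (simp add: algebra_simps power2_eq_square)
  ultimately show ?thesis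
    unfolding radial_weight_def powr_divide using a by (simp add: field_simps power2_eq_square)
qed

lemma continuous_on_radial_weight: "t < 1 \<Longrightarrow> continuous_on {0..t} (radial_weight s)"
  unfolding radial_weight_def by (intro continuous_intros) auto

definition bergman_weight :: "real \<Rightarrow> complex \<Rightarrow> complex \<Rightarrow> complex" where
  "bergman_weight s z x = of_real (Tfun z x powr s) * bergK x x"

lemma continuous_on_bergman_weight [continuous_intros]:
  assumes "cmod z < 1" "continuous_on S f" "f ` S \<subseteq> ball 0 1"
  shows "continuous_on S (\<lambda>x. bergman_weight s z (f x))"
  unfolding bergman_weight_def using assms by (intro continuous_intros)

lemma cnj_bergman_weight [simp]: "cnj (bergman_weight s z x) = bergman_weight s z x"
  by (simp add: bergman_weight_def bergK_diag)

lemma bergman_weight_mobius: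
  assumes z: "cmod z < 1" and w: "cmod w < 1"
  shows "(cmod (((cmod z)^2 - 1) / (1 - cnj z * w)^2))^2 *\<^sub>R bergman_weight s z (mobius z w) =
           of_real (radial_weight s (cmod w))"
proof -
  have "(cmod (((cmod z)^2 - 1) / (1 - cnj z * w)^2))^2 *\<^sub>R bergman_weight s z (mobius z w) =
      of_real (((1 - cmod w) / (1 + cmod w)) powr s *
        ((cmod (((cmod z)^2 - 1) / (1 - cnj z * w)^2))^2 * (1 / (1 - (cmod (mobius z w))^2)^2)))"
    by (simp add: bergman_weight_def Tfun_mobius[OF z w] bergK_diag scaleR_conv_of_real)
  also have "\<dots> = of_real (radial_weight s (cmod w))"
    using norm_mobius_deriv_sq_bergK_diag[OF z w] radial_weight_eq[of "cmod w" s] w by simp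
  finally show ?thesis .
qed

lemma integral_mobius_image_ball_bergK:
  assumes z: "cmod z < 1" and t: "0 < t" "t < 1" and y: "cmod y < 1"
  shows "integral (mobius z ` ball 0 t) (\<lambda>x. bergman_weight s z x * bergK x y)
       = of_real (2 * pi * integral {0..t} (\<lambda>r. radial_weight s r * r)) * bergK z y"
proof -
  define d where "d = (\<lambda>w. complex_of_real ((cmod z)^2 - 1) / (1 - cnj z * w)^2)"
  define f where "f = (\<lambda>x. bergman_weight s z x * bergK x y)"
  define h where "h = (\<lambda>w. bergK (mobius z w) y)"
  define b where "b = of_real (2 * pi * integral {0..t} (\<lambda>r. radial_weight s r * r)) * h 0"
  have h: "h holomorphic_on ball 0 1"
    unfolding h_def by (rule holomorphic_on_bergK_mobius[OF z y])
  have subst: "\<bar>jacobian_det (\<lambda>u. d w * u)\<bar> *\<^sub>R f (mobius z w) = of_real (radial_weight s (cmod w)) * h w"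
    if "w \<in> ball 0 t" for w
  proof -
    have "\<bar>jacobian_det (\<lambda>u. d w * u)\<bar> *\<^sub>R f (mobius z w) =
        ((cmod (d w))^2 *\<^sub>R bergman_weight s z (mobius z w)) * h w"
      by (simp add: jacobian_det_mult f_def h_def)
    also have "\<dots> = of_real (radial_weight s (cmod w)) * h w"
      using bergman_weight_mobius[OF z, of w s] that t by (simp add: d_def)
    finally show ?thesis .
  qed
  have der: "(mobius z has_derivative (\<lambda>u. d w * u)) (at w)" if "w \<in> ball 0 t" for w
  proof -
    have "cmod w < 1" using that t by simp
    from mobius_has_field_derivative[OF mobius_denom_nonzero[OF z this]]
    show ?thesis unfolding has_field_derivative_def d_def .
  qed
  have inj: "inj_on (mobius z) (ball 0 t)"
    using inj_on_mobius[OF z] by (rule inj_on_subset) (use t in auto)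
  have "continuous_on (cball 0 t) h"
    by (rule continuous_on_subset[OF holomorphic_on_imp_continuous_on[OF h]]) (use t in auto)
  moreover have "continuous_on (cball 0 t) (\<lambda>w. radial_weight s (cmod w))"
    by (rule continuous_on_compose2[OF continuous_on_radial_weight[OF t(2)]])
      (auto intro: continuous_intros)
  ultimately have "(\<lambda>w. of_real (radial_weight s (cmod w)) * h w) absolutely_integrable_on ball 0 t"
    by (intro integral_ball_polar(1)[OF t(1)] continuous_intros)
  then have "(\<lambda>w. \<bar>jacobian_det (\<lambda>u. d w * u)\<bar> *\<^sub>R f (mobius z w)) absolutely_integrable_on ball 0 t"
    by (subst set_integrable_cong[OF refl refl subst]) auto
  moreover have "integral (ball 0 t) (\<lambda>w. of_real (radial_weight s (cmod w)) * h w) = b"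
    unfolding b_def
    by (rule integral_ball_radial_mean_value[OF t h continuous_on_radial_weight[OF t(2)]])
  then have "integral (ball 0 t) (\<lambda>w. \<bar>jacobian_det (\<lambda>u. d w * u)\<bar> *\<^sub>R f (mobius z w)) = b"
    by (subst integral_cong[OF subst]) auto
  ultimately have "integral (mobius z ` ball 0 t) f = b"
    using has_absolute_integral_change_of_variables_complex[OF open_ball der inj] by blast
  then show ?thesis by (simp add: f_def b_def h_def mobius_def)
qed

lemma tanh_half_real: "tanh (x / 2) = (exp x - 1) / (exp x + 1 :: real)"
proof -
  have "tanh (x / 2) = (1 - exp (-x)) / (1 + exp (-x))" by (simp add: tanh_real_altdef)
  also have "\<dots> = (exp x - 1) / (exp x + 1)"
    by (simp add: exp_minus divide_simps add_pos_pos)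
  finally show ?thesis .
qed

lemma Uset_eq_mobius_image_ball:
  assumes z: "cmod z < 1"
  shows "Uset N z = mobius z ` ball 0 (tanh (N/2))"
proof -
  have "hdist z x < N \<longleftrightarrow> cmod (mobius z x) < tanh (N/2)" if x: "cmod x < 1" for x
  proof -
    define m where "m = cmod (mobius z x)"
    have m: "0 \<le> m" "m < 1" using norm_mobius_less_1[OF z x] by (auto simp: m_def)
    have "(1 + m) / (1 - m) > 0" using m by simp
    then have "hdist z x < N \<longleftrightarrow> (1 + m) / (1 - m) < exp N"
      unfolding hdist_def m_def[symmetric] by (metis exp_less_cancel_iff exp_ln)
    also have "\<dots> \<longleftrightarrow> m * (exp N + 1) < exp N - 1"
      using m by (simp add: divide_less_eq algebra_simps)
    also have "\<dots> \<longleftrightarrow> m < tanh (N/2)"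
      unfolding tanh_half_real by (simp add: pos_less_divide_eq add_pos_pos)
    finally show ?thesis by (simp add: m_def)
  qed
  then have "Uset N z = {x \<in> ball 0 1. cmod (mobius z x) < tanh (N/2)}"
    by (auto simp: Uset_def unit_disk_def)
  also have "\<dots> = mobius z ` ball 0 (tanh (N/2))"
    using mobius_image_ball[OF z, of "tanh (N/2)"] tanh_real_lt_1[of "N/2"] by simp
  finally show ?thesis .
qed

section \<open>The double integral\<close>

lemma set_integrable_compact_superset:
  fixes f :: "'a::euclidean_space \<Rightarrow> 'b::{banach, second_countable_topology}"
  assumes "compact K" "continuous_on K f" "A \<in> sets borel" "A \<subseteq> K"
  shows "set_integrable lborel A f"
proof -
  have "set_integrable lborel K f"
    using borel_integrable_compact[OF assms(1,2)] by (simp add: set_integrable_def)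
  then show ?thesis by (rule set_integrable_subset) (use assms(3,4) in simp_all)
qed

lemma open_mobius_image_ball:
  assumes z: "cmod z < 1" and t: "t \<le> 1"
  shows "open (mobius z ` ball 0 t)"
proof -
  have "mobius z ` ball 0 t = ball 0 1 \<inter> mobius z -` ball 0 t"
    unfolding mobius_image_ball[OF z t] by auto
  then show ?thesis
    using continuous_open_preimage[OF continuous_on_mobius[OF z] open_ball open_ball] by simp
qed

lemma mobius_image_subset_disk: "cmod z < 1 \<Longrightarrow> A \<subseteq> ball 0 1 \<Longrightarrow> mobius z ` A \<subseteq> ball 0 1"
  using norm_mobius_less_1[of z] by auto

lemma compact_mobius_image_cball:
  assumes z: "cmod z < 1" and t: "t < 1"
  shows "compact (mobius z ` cball 0 t)"
  using t by (intro compact_continuous_image compact_cball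
      continuous_on_subset[OF continuous_on_mobius[OF z]]) auto

lemma set_integral_mobius_image_ball_bergK:
  assumes z: "cmod z < 1" and t: "0 < t" "t < 1" and y: "cmod y < 1"
  shows "set_integrable lborel (mobius z ` ball 0 t) (\<lambda>x. bergman_weight s z x * bergK x y)"
    "(LINT x:mobius z ` ball 0 t|lborel. bergman_weight s z x * bergK x y) =
       of_real (2 * pi * (LINT r:{0..t}|lborel. radial_weight s r * r)) * bergK z y"
proof -
  let ?K = "mobius z ` cball 0 t"
  have K: "?K \<subseteq> ball 0 1"
    using t by (intro mobius_image_subset_disk[OF z]) auto
  have "continuous_on ?K (\<lambda>x. bergman_weight s z x)"
    by (rule continuous_on_bergman_weight[OF z continuous_on_id]) (use K in auto)
  moreover have "continuous_on ?K (\<lambda>x. bergK x y)"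
    by (rule continuous_on_bergK[OF continuous_on_id continuous_on_const]) (use K y in auto)
  ultimately have "continuous_on ?K (\<lambda>x. bergman_weight s z x * bergK x y)"
    by (rule continuous_on_mult)
  moreover have "mobius z ` ball 0 t \<in> sets borel"
    using open_mobius_image_ball[OF z less_imp_le[OF t(2)]] by simp
  ultimately show int: "set_integrable lborel (mobius z ` ball 0 t) (\<lambda>x. bergman_weight s z x * bergK x y)"
    by (intro set_integrable_compact_superset[OF compact_mobius_image_cball[OF z t(2)]]) auto
  have "continuous_on {0..t} (\<lambda>r. radial_weight s r * r)"
    by (rule continuous_on_mult[OF continuous_on_radial_weight[OF t(2)] continuous_on_id])
  then have "set_integrable lborel {0..t} (\<lambda>r. radial_weight s r * r)"
    by (rule set_integrable_compact_superset[OF compact_Icc]) auto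
  then have "integral {0..t} (\<lambda>r. radial_weight s r * r) = (LINT r:{0..t}|lborel. radial_weight s r * r)"
    by (rule set_borel_integral_eq_integral(2)[symmetric])
  then show "(LINT x:mobius z ` ball 0 t|lborel. bergman_weight s z x * bergK x y) =
      of_real (2 * pi * (LINT r:{0..t}|lborel. radial_weight s r * r)) * bergK z y"
    using set_borel_integral_eq_integral(2)[OF int] integral_mobius_image_ball_bergK[OF z t y, of s]
    by (simp only:)
qed

lemma set_integral_mobius_image_ball_bergK':
  assumes z: "cmod z < 1" and t: "0 < t" "t < 1" and x: "cmod x < 1"
  shows "(LINT y:mobius z ` ball 0 t|lborel. bergman_weight s z y * bergK x y) =
           of_real (2 * pi * (LINT r:{0..t}|lborel. radial_weight s r * r)) * bergK x z"
proof -
  have "(LINT y:mobius z ` ball 0 t|lborel. bergman_weight s z y * bergK x y) =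
      cnj (LINT y:mobius z ` ball 0 t|lborel. bergman_weight s z y * bergK y x)"
    unfolding set_lebesgue_integral_def Bochner_Integration.integral_cnj[symmetric]
    by (intro Bochner_Integration.integral_cong) (auto simp: cnj_bergK)
  then show ?thesis
    using set_integral_mobius_image_ball_bergK(2)[OF z t x] by (simp add: cnj_bergK)
qed

lemma set_integrable_bergman_product:
  assumes z: "cmod z < 1" and t: "t < 1"
  shows "set_integrable lborel (mobius z ` ball 0 t \<times> mobius z ` ball 0 t)
           (\<lambda>p. bergman_weight s z (fst p) * (bergman_weight s z (snd p) * bergK (fst p) (snd p)))"
proof (rule set_integrable_compact_superset)
  let ?K = "mobius z ` cball 0 t"
  have K: "?K \<subseteq> ball 0 1" using t by (intro mobius_image_subset_disk[OF z]) auto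
  show "compact (?K \<times> ?K)"
    by (rule compact_Times[OF compact_mobius_image_cball[OF z t] compact_mobius_image_cball[OF z t]])
  show "mobius z ` ball 0 t \<times> mobius z ` ball 0 t \<subseteq> ?K \<times> ?K" by auto
  show "mobius z ` ball 0 t \<times> mobius z ` ball 0 t \<in> sets borel"
    using open_mobius_image_ball[OF z] t by (simp add: borel_open open_Times)
  have fst: "continuous_on (?K \<times> ?K) fst" "fst ` (?K \<times> ?K) \<subseteq> ball 0 1"
    and snd: "continuous_on (?K \<times> ?K) snd" "snd ` (?K \<times> ?K) \<subseteq> ball 0 1"
    using continuous_on_fst[OF continuous_on_id] continuous_on_snd[OF continuous_on_id] K
    by auto
  have "continuous_on (?K \<times> ?K) (\<lambda>p. bergman_weight s z (fst p))"
    "continuous_on (?K \<times> ?K) (\<lambda>p. bergman_weight s z (snd p))"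
    "continuous_on (?K \<times> ?K) (\<lambda>p. bergK (fst p) (snd p))"
    by (rule continuous_on_bergman_weight[OF z fst] continuous_on_bergman_weight[OF z snd]
        continuous_on_bergK[OF fst(1) snd(1) fst(2) snd(2)])+
  then show "continuous_on (?K \<times> ?K)
      (\<lambda>p. bergman_weight s z (fst p) * (bergman_weight s z (snd p) * bergK (fst p) (snd p)))"
    by (intro continuous_on_mult)
qed

lemma (in pair_sigma_finite) set_integral_Times:
  fixes f :: "_ \<Rightarrow> _::{banach, second_countable_topology}"
  assumes "set_integrable (M1 \<Otimes>\<^sub>M M2) (A \<times> B) f"
  shows "(LINT p:A \<times> B|M1 \<Otimes>\<^sub>M M2. f p) = (LINT x:A|M1. (LINT y:B|M2. f (x, y)))"
proof -
  have "(LINT p:A \<times> B|M1 \<Otimes>\<^sub>M M2. f p) = (\<integral>x. (\<integral>y. indicator (A \<times> B) (x, y) *\<^sub>R f (x, y) \<partial>M2) \<partial>M1)"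
    using integral_fst'[OF assms[unfolded set_integrable_def]] by (simp add: set_lebesgue_integral_def)
  also have "\<dots> = (LINT x:A|M1. (LINT y:B|M2. f (x, y)))"
    unfolding set_lebesgue_integral_def
    by (intro Bochner_Integration.integral_cong refl) (simp add: indicator_times split: split_indicator)
  finally show ?thesis .
qed

lemma pair_dmu_eq_density: "dmu \<Otimes>\<^sub>M dmu = density (lborel \<Otimes>\<^sub>M lborel) (\<lambda>_. ennreal (1 / pi^2))"
proof -
  have sf: "sigma_finite_measure (density lborel (\<lambda>_::complex. ennreal (1 / pi)))"
    by (subst sigma_finite_measure.sigma_finite_iff_density_finite[OF lborel.sigma_finite_measure_axioms]) auto
  have "dmu \<Otimes>\<^sub>M dmu = density (lborel \<Otimes>\<^sub>M lborel) (\<lambda>(x,y). ennreal (1/pi) * ennreal (1/pi))"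
    unfolding dmu_def by (rule pair_measure_density) (auto intro: sf lborel.sigma_finite_measure_axioms)
  also have "(\<lambda>(x::complex, y::complex). ennreal (1/pi) * ennreal (1/pi)) = (\<lambda>_. ennreal (1 / pi^2))"
    by (auto simp: ennreal_mult[symmetric] power2_eq_square)
  finally show ?thesis .
qed

lemma I_N1_eq:
  assumes z: "cmod z < 1" and N: "0 < N"
  shows "I_N1 s z N = of_real (4 / (1 - (cmod z)^2)^2 *
           (LINT r:{0..tanh (N/2)}|lborel. radial_weight s r * r)^2)"
proof -
  define t where "t = tanh (N/2)"
  have t: "0 < t" "t < 1" using N by (simp_all add: t_def tanh_real_lt_1)
  define U where "U = mobius z ` ball 0 t"
  define A where "A = 2 * pi * (LINT r:{0..t}|lborel. radial_weight s r * r)"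
  define \<Phi> where "\<Phi> = (\<lambda>p::complex \<times> complex. complex_of_real (Tfun z (fst p) powr s * Tfun z (snd p) powr s)
      * bergK (fst p) (fst p) * bergK (snd p) (snd p) * bergK (fst p) (snd p))"
  have \<Phi>_eq: "\<Phi> = (\<lambda>p. bergman_weight s z (fst p) * (bergman_weight s z (snd p) * bergK (fst p) (snd p)))"
    by (simp add: \<Phi>_def bergman_weight_def mult_ac fun_eq_iff)
  have U: "U \<in> sets borel"
    using open_mobius_image_ball[OF z, of t] t by (simp add: U_def)
  have \<Phi>_int: "set_integrable (lborel \<Otimes>\<^sub>M lborel) (U \<times> U) \<Phi>"
    unfolding lborel_prod \<Phi>_eq U_def by (rule set_integrable_bergman_product[OF z t(2)])
  have inner: "(LINT y:U|lborel. bergman_weight s z y * bergK x y) = of_real A * bergK x z" if "x \<in> U" for x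
    using set_integral_mobius_image_ball_bergK'[OF z t, of x s] that norm_mobius_less_1[OF z] t
    by (auto simp: U_def A_def)
  have "I_N1 s z N = (LINT p:U \<times> U|density (lborel \<Otimes>\<^sub>M lborel) (\<lambda>_. ennreal (1 / pi^2)). \<Phi> p)"
    unfolding I_N1_def Uset_eq_mobius_image_ball[OF z] pair_dmu_eq_density \<Phi>_def t_def U_def ..
  also have "\<dots> = of_real (1 / pi^2) * (LINT p:U \<times> U|lborel \<Otimes>\<^sub>M lborel. \<Phi> p)"
    using \<Phi>_int unfolding set_lebesgue_integral_def set_integrable_def
    by (subst integral_density) (auto simp: scaleR_conv_of_real)
  also have "(LINT p:U \<times> U|lborel \<Otimes>\<^sub>M lborel. \<Phi> p) =
      (LINT x:U|lborel. bergman_weight s z x * (LINT y:U|lborel. bergman_weight s z y * bergK x y))"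
    unfolding lborel_pair.set_integral_Times[OF \<Phi>_int] by (simp add: \<Phi>_eq)
  also have "\<dots> = (LINT x:U|lborel. of_real A * (bergman_weight s z x * bergK x z))"
    using U inner by (intro set_lebesgue_integral_cong) (simp_all add: mult.left_commute)
  also have "\<dots> = of_real A * (of_real A * bergK z z)"
    using set_integral_mobius_image_ball_bergK(2)[OF z t z, of s] by (simp add: U_def A_def)
  also have "of_real (1 / pi^2) * (of_real A * (of_real A * bergK z z)) =
      complex_of_real (1 / pi^2 * (A * (A * (1 / (1 - (cmod z)^2)^2))))"
    by (simp add: bergK_diag)
  also have "1 / pi^2 * (A * (A * (1 / (1 - (cmod z)^2)^2))) =
      4 / (1 - (cmod z)^2)^2 * (LINT r:{0..t}|lborel. radial_weight s r * r)^2"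
    by (simp add: A_def power2_eq_square)
  finally show ?thesis by (simp add: t_def)
qed

section \<open>Passing to the limit\<close>

lemma set_integrable_one_minus_powr:
  assumes "a > -1"
  shows "set_integrable lborel {0..1} (\<lambda>x::real. (1 - x) powr a)"
proof -
  have "((\<lambda>x. x powr a) has_integral (1 / (a + 1))) {0..1}"
    using has_integral_powr_from_0[OF assms, of 1] by simp
  then have "((\<lambda>x. (- x) powr a) has_integral (1 / (a + 1))) {-1..0}"
    using has_integral_reflect_real[of "\<lambda>x. x powr a" _ 1 0] by simp
  then have "((\<lambda>x. (1 - x) powr a) has_integral (1 / (a + 1))) {0..1}"
    using has_integral_shift_Icc_real[of "\<lambda>x. (- x) powr a" "-1" _ 0 1] by (simp add: o_def)
  then have "(\<lambda>x. (1 - x) powr a) absolutely_integrable_on {0..1}"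
    by (intro nonnegative_absolutely_integrable_1) (auto simp: integrable_on_def)
  moreover have "(\<lambda>x. indicator {0..1} x *\<^sub>R (1 - x) powr a) \<in> borel_measurable lborel"
    by measurable
  ultimately show ?thesis
    unfolding set_integrable_def by (simp add: integrable_completion)
qed

lemma set_integrable_radial_weight:
  assumes s: "1 < s"
  shows "set_integrable lborel {0..<1} (\<lambda>r. radial_weight s r * r)"
proof (rule set_integrable_bound)
  show "set_integrable lborel {0..<1} (\<lambda>r::real. (1 - r) powr (s - 2))"
    by (rule set_integrable_subset[OF set_integrable_one_minus_powr]) (use s in auto)
  show "set_borel_measurable lborel {0..<1} (\<lambda>r. radial_weight s r * r)"
    unfolding set_borel_measurable_def radial_weight_def by measurable
  have "radial_weight s r * r \<le> (1 - r) powr (s - 2)" if r: "0 \<le> r" "r < 1" for r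
  proof -
    have "1 \<le> (1 + r) powr (s + 2)" using r s by (intro ge_one_powr_ge_zero) auto
    then have "radial_weight s r \<le> (1 - r) powr (s - 2)"
      unfolding radial_weight_def by (simp add: divide_le_eq mult_le_cancel_left1)
    then show ?thesis
      using r by (smt (verit) mult_left_le radial_weight_def divide_nonneg_nonneg powr_ge_zero)
  qed
  then show "AE r in lborel. r \<in> {0..<1} \<longrightarrow> norm (radial_weight s r * r) \<le> norm ((1 - r) powr (s - 2))"
    by (intro AE_I2) (auto simp: radial_weight_def)
qed

lemma filterlim_tanh_half_at_left_1: "filterlim (\<lambda>N::real. tanh (N/2)) (at_left 1) at_top"
proof (rule tendsto_imp_filterlim_at_left)
  have "filterlim (\<lambda>N::real. N/2) at_top at_top"
    using filterlim_tendsto_pos_mult_at_top[OF tendsto_const[of "1/2"] _ filterlim_ident] by simp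
  then show "((\<lambda>N::real. tanh (N/2)) \<longlongrightarrow> 1) at_top"
    by (rule filterlim_compose[OF tanh_real_at_top])
  show "\<forall>\<^sub>F N in at_top. tanh (N/2) < (1::real)" by (simp add: tanh_real_lt_1)
qed

theorem lemma2p3:
  fixes s :: real and z :: complex
  assumes "1 < s" and "s < 3/2" and "z \<in> unit_disk"
  shows "((\<lambda>N. I_N1 s z N) \<longlongrightarrow>
           complex_of_real (4 / (1 - (cmod z)\<^sup>2)\<^sup>2 *
             (LINT r : {0<..<1} | lborel. (1 - r) powr (s - 2) / (1 + r) powr (s + 2) * r)\<^sup>2))
         at_top"
proof -
  have z: "cmod z < 1" using assms(3) by (simp add: unit_disk_def)
  have "((\<lambda>t. LINT r:{0..t}|lborel. radial_weight s r * r) \<longlongrightarrow>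
      (LINT r:{0..<1}|lborel. radial_weight s r * r)) (at_left 1)"
    by (rule tendsto_set_lebesgue_integral_at_left[OF _ _ set_integrable_radial_weight[OF assms(1)]]) auto
  from filterlim_compose[OF this filterlim_tanh_half_at_left_1]
  have "((\<lambda>N. I_N1 s z N) \<longlongrightarrow>
      complex_of_real (4 / (1 - (cmod z)\<^sup>2)\<^sup>2 * (LINT r:{0..<1}|lborel. radial_weight s r * r)\<^sup>2)) at_top"
    by (rule Lim_transform_eventually[OF tendsto_of_real[OF tendsto_mult[OF tendsto_const tendsto_power]]])
      (use eventually_gt_at_top[of 0] in \<open>eventually_elim, simp add: I_N1_eq[OF z]\<close>)
  moreover have "(LINT r:{0..<1}|lborel. radial_weight s r * r) =
      (LINT r:{0<..<1}|lborel. (1 - r) powr (s - 2) / (1 + r) powr (s + 2) * r)"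
    unfolding set_lebesgue_integral_def
    by (intro Bochner_Integration.integral_cong) (auto simp: indicator_def radial_weight_def)
  ultimately show ?thesis by simp
qed

end
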